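(* Fix $n$. For every $\breve x\in\mathcal S^n$ and every $\breve z\in\breve{\mathcal Z}^n(\breve x)$ there exists $u=(u^c,u^s)\in\Delta_I\times\Delta_J$ (depending on $\breve x,\breve z$) such that $$b^n(\breve x,\breve z)=h^n-B^n_1\big(\breve x-\langle e,\breve x\rangle^+u^c\big)+B^n_2u^s\langle e,\breve x\rangle^-+\breve\zeta^n(\breve x,\breve z)\big(B^n_1u^c+B^n_2u^s\big).$$ Moreover, for the matrices $B^n_1,B^n_2$ associated with any fixed $(\hat\imath,\hat\jmath)\in\mathcal E$, the column $\hat\jmath$ of $B^n_2$ is identically zero, and there is an ordering of the classes in which $\hat\imath$ is last such that, in that ordering, $B^n_1$ is lower triangular with positive diagonal entries and its last diagonal entry equals $\mu^n_{\hat\imath\hat\jmath}$.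
   Context: Network: $\mathcal I=\{1,\dots,I\}$, $\mathcal J=\{1,\dots,J\}$, edges $\mathcal E\subset\mathcal I\times\mathcal J$ with the bipartite graph $\mathcal G=(\mathcal I\cup\mathcal J,\mathcal E)$ a tree; $i\sim j$ iff $(i,j)\in\mathcal E$, $\mathcal J(i)=\{j:i\sim j\}$, $\mathcal I(j)=\{i:i\sim j\}$; $\mathbb R^{\mathcal G}$ (resp. $\mathbb Z^{\mathcal G}_+$) are arrays $[z_{ij}]\in\mathbb R^{I\times J}$ (resp. with nonnegative integer entries) vanishing for $i\not\sim j$. For each $n$: arrival rates $\lambda^n_i>0$, service rates $\mu^n_{ij}>0$, pool sizes $N^n_j\in\mathbb N$, with the Halfin–Whitt asymptotics $\lambda^n_i/n\to\lambda_i>0$, $N^n_j/n\to\nu_j>0$, $\mu^n_{ij}\to\mu_{ij}>0$, and $(\lambda^n_i-n\lambda_i)/\sqrt n$, $\sqrt n(\mu^n_{ij}-\mu_{ij})$, $\sqrt n(N^n_j/n-\nu_j)$ convergent. Complete resource pooling: the LP "minimize $\max_j\sum_i\xi_{ij}$ over nonnegative $\xi\in\mathbb R^{\mathcal G}$ subject to $\sum_j\mu_{ij}\nu_j\xi_{ij}=\lambda_i$ $\forall i$" has a unique solution $\xi^*$, with $\sum_i\xi^*_{ij}=1$ for all $j$ and $\xi^*_{ij}>0$ for $i\sim j$. The map $\Psi$ and matrices: let $\mathcal D=\{(\alpha,\beta)\in\mathbb R^I\times\mathbb R^J:\sum_i\alpha_i=\sum_j\beta_j\}$ and let $\Psi:\mathcal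 D\to\mathbb R^{\mathcal G}$ be the unique linear map with $\sum_j\Psi_{ij}(\alpha,\beta)=\alpha_i$ for all $i$ and $\sum_i\Psi_{ij}(\alpha,\beta)=\beta_j$ for all $j$ (unique since $\mathcal G$ is a tree). Given $(\hat\imath,\hat\jmath)\in\mathcal E$, $B^n_1\in\mathbb R^{I\times I}$, $B^n_2\in\mathbb R^{I\times J}$ are the unique matrices such that column $\hat\jmath$ of $B^n_2$ is zero and $\sum_{j\in\mathcal J(i)}\mu^n_{ij}\Psi_{ij}(\alpha,\beta)=(B^n_1\alpha+B^n_2\beta)_i$ for all $i$ and all $(\alpha,\beta)\in\mathcal D$. $n$-th system in diffusion scale: for $x\in\mathbb Z^I_+$, the work-conserving action set is $\mathcal Z^n(x)=\{z\in\mathbb Z^{\mathcal G}_+: q_i\ge0,\ y_j\ge0,\ q_i\wedge y_j=0\ \forall(i,j)\in\mathcal E\}$ with $q_i=x_i-\sum_jz_{ij}$, $y_j=N^n_j-\sum_iz_{ij}$. Let $\bar z^n_{ij}=\xi^*_{ij}N^n_j$, $\bar x^n_i=\sum_j\bar z^n_{ij}$, $\mathcal S^n=\{\breve x\in\mathbb R^I:\sqrt n\breve x+\bar x^n\in\mathbb Z^I_+\}$, and $\breve{\mathcal Z}^n(\breve x)=\{\breve z:\sqrt n\breve z+\bar z^n\in\mathcal Z^n(\sqrt n\breve x+\bar x^n)\}$. Define $h^n_i:=n^{-1/2}(\lambda^n_i-\sum_{j\in\mathcal J(i)}\mu^n_{ij}\xi^*_{ij}N^n_j)$, the drift $b^n_i(\breve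 x,\breve z):=h^n_i-\sum_{j\in\mathcal J(i)}\mu^n_{ij}\breve z_{ij}$, $\breve q^n_i:=\breve x_i-\sum_j\breve z_{ij}$, $\breve y^n_j:=-\sum_i\breve z_{ij}$, and $\breve\zeta^n(\breve x,\breve z):=\langle e,\breve q^n\rangle\wedge\langle e,\breve y^n\rangle$. Here $e$ is the all-ones vector, $a^\pm$ are positive/negative parts, and $\Delta_I=\{u\in\mathbb R^I_+:\langle e,u\rangle=1\}$, $\Delta_J$ likewise. *)

theory Defs
  imports "HOL-Analysis.Analysis"
begin

text \<open>Classes are indexed by 1..I, pools by 1..J (natural numbers).
  Vectors in R^K are functions nat => real vanishing outside 1..K;
  arrays in R^G are functions nat => nat => real vanishing off the edge set E.\<close>

definition vecs :: "nat \<Rightarrow> (nat \<Rightarrow> real) set" where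
  "vecs K = {v. \<forall>k. k \<notin> {1..K} \<longrightarrow> v k = 0}"

definition mats :: "nat \<Rightarrow> nat \<Rightarrow> (nat \<Rightarrow> nat \<Rightarrow> real) set" where
  "mats K L = {M. \<forall>k l. k \<notin> {1..K} \<or> l \<notin> {1..L} \<longrightarrow> M k l = 0}"

definition arrays :: "(nat \<times> nat) set \<Rightarrow> (nat \<Rightarrow> nat \<Rightarrow> real) set" where
  "arrays E = {z. \<forall>i j. (i, j) \<notin> E \<longrightarrow> z i j = 0}"

definition mvec :: "nat \<Rightarrow> (nat \<Rightarrow> nat \<Rightarrow> real) \<Rightarrow> (nat \<Rightarrow> real) \<Rightarrow> nat \<Rightarrow> real" where
  "mvec L M v = (\<lambda>i. \<Sum>l\<in>{1..L}. M i l * v l)"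

definition std_simplex :: "nat \<Rightarrow> (nat \<Rightarrow> real) set" where
  "std_simplex K = {u \<in> vecs K. (\<forall>k. 0 \<le> u k) \<and> (\<Sum>k\<in>{1..K}. u k) = 1}"

definition posp :: "real \<Rightarrow> real" where "posp a = max a 0"
definition negp :: "real \<Rightarrow> real" where "negp a = max (- a) 0"

definition bip_vertices :: "nat \<Rightarrow> nat \<Rightarrow> (nat + nat) set" where
  "bip_vertices I J = Inl ` {1..I} \<union> Inr ` {1..J}"

definition bip_adj :: "(nat \<times> nat) set \<Rightarrow> (nat + nat) \<Rightarrow> (nat + nat) \<Rightarrow> bool" where
  "bip_adj E u v \<longleftrightarrow> (\<exists>i j. (i, j) \<in> E \<and> ((u = Inl i \<and> v = Inr j) \<or> (u = Inr j \<and> v = Inl i)))"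

definition is_bip_tree :: "nat \<Rightarrow> nat \<Rightarrow> (nat \<times> nat) set \<Rightarrow> bool" where
  "is_bip_tree I J E \<longleftrightarrow>
     E \<subseteq> {1..I} \<times> {1..J} \<and>
     (\<forall>u\<in>bip_vertices I J. \<forall>v\<in>bip_vertices I J. (u, v) \<in> {(a, b). bip_adj E a b}\<^sup>*) \<and>
     \<not> (\<exists>vs. 3 \<le> length vs \<and> distinct vs \<and>
            (\<forall>k < length vs - 1. bip_adj E (vs ! k) (vs ! (k + 1))) \<and>
            bip_adj E (last vs) (hd vs))"

definition Dset :: "nat \<Rightarrow> nat \<Rightarrow> ((nat \<Rightarrow> real) \<times> (nat \<Rightarrow> real)) set" where
  "Dset I J = {(\<alpha>, \<beta>). \<alpha> \<in> vecs I \<and> \<beta> \<in> vecs J \<and> (\<Sum>i\<in>{1..I}. \<alpha> i) = (\<Sum>j\<in>{1..J}. \<beta> j)}"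

definition Psi :: "nat \<Rightarrow> nat \<Rightarrow> (nat \<times> nat) set \<Rightarrow> (nat \<Rightarrow> real) \<Rightarrow> (nat \<Rightarrow> real) \<Rightarrow> nat \<Rightarrow> nat \<Rightarrow> real" where
  "Psi I J E \<alpha> \<beta> = (THE z. z \<in> arrays E \<and>
       (\<forall>i\<in>{1..I}. (\<Sum>j\<in>{1..J}. z i j) = \<alpha> i) \<and>
       (\<forall>j\<in>{1..J}. (\<Sum>i\<in>{1..I}. z i j) = \<beta> j))"

definition Bmats :: "nat \<Rightarrow> nat \<Rightarrow> (nat \<times> nat) set \<Rightarrow> (nat \<Rightarrow> nat \<Rightarrow> real) \<Rightarrow> nat
     \<Rightarrow> (nat \<Rightarrow> nat \<Rightarrow> real) \<times> (nat \<Rightarrow> nat \<Rightarrow> real)" where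
  "Bmats I J E mu jh = (THE (B1, B2). B1 \<in> mats I I \<and> B2 \<in> mats I J \<and>
       (\<forall>i. B2 i jh = 0) \<and>
       (\<forall>(\<alpha>, \<beta>) \<in> Dset I J. \<forall>i\<in>{1..I}.
          (\<Sum>j\<in>{j. (i, j) \<in> E}. mu i j * Psi I J E \<alpha> \<beta> i j) = mvec I B1 \<alpha> i + mvec J B2 \<beta> i))"

definition B1mat where "B1mat I J E mu jh = fst (Bmats I J E mu jh)"
definition B2mat where "B2mat I J E mu jh = snd (Bmats I J E mu jh)"

definition lp_feasible :: "nat \<Rightarrow> nat \<Rightarrow> (nat \<times> nat) set \<Rightarrow> (nat \<Rightarrow> real) \<Rightarrow> (nat \<Rightarrow> nat \<Rightarrow> real)
     \<Rightarrow> (nat \<Rightarrow> real) \<Rightarrow> (nat \<Rightarrow> nat \<Rightarrow> real) \<Rightarrow> bool" where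
  "lp_feasible I J E lam mu nu \<xi> \<longleftrightarrow> \<xi> \<in> arrays E \<and> (\<forall>i j. 0 \<le> \<xi> i j) \<and>
     (\<forall>i\<in>{1..I}. (\<Sum>j\<in>{1..J}. mu i j * nu j * \<xi> i j) = lam i)"

definition lp_obj :: "nat \<Rightarrow> nat \<Rightarrow> (nat \<Rightarrow> nat \<Rightarrow> real) \<Rightarrow> real" where
  "lp_obj I J \<xi> = Max ((\<lambda>j. \<Sum>i\<in>{1..I}. \<xi> i j) ` {1..J})"

definition unique_lp_solution where
  "unique_lp_solution I J E lam mu nu \<xi>s \<longleftrightarrow> lp_feasible I J E lam mu nu \<xi>s \<and>
     (\<forall>\<xi>. lp_feasible I J E lam mu nu \<xi> \<longrightarrow> lp_obj I J \<xi>s \<le> lp_obj I J \<xi>) \<and>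
     (\<forall>\<xi>. lp_feasible I J E lam mu nu \<xi> \<and> lp_obj I J \<xi> \<le> lp_obj I J \<xi>s \<longrightarrow> \<xi> = \<xi>s)"

definition Zws :: "nat \<Rightarrow> nat \<Rightarrow> (nat \<times> nat) set \<Rightarrow> (nat \<Rightarrow> nat) \<Rightarrow> (nat \<Rightarrow> real)
     \<Rightarrow> (nat \<Rightarrow> nat \<Rightarrow> real) set" where
  "Zws I J E N x = {z \<in> arrays E. (\<forall>i j. z i j \<in> \<nat>) \<and>
     (let q = (\<lambda>i. x i - (\<Sum>j\<in>{1..J}. z i j)); y = (\<lambda>j. real (N j) - (\<Sum>i\<in>{1..I}. z i j)) in
       (\<forall>i\<in>{1..I}. 0 \<le> q i) \<and> (\<forall>j\<in>{1..J}. 0 \<le> y j) \<and> (\<forall>(i, j)\<in>E. min (q i) (y j) = 0))}"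

definition zbar :: "(nat \<Rightarrow> nat \<Rightarrow> real) \<Rightarrow> (nat \<Rightarrow> nat) \<Rightarrow> nat \<Rightarrow> nat \<Rightarrow> real" where
  "zbar \<xi> N = (\<lambda>i j. \<xi> i j * real (N j))"

definition xbar :: "nat \<Rightarrow> (nat \<Rightarrow> nat \<Rightarrow> real) \<Rightarrow> (nat \<Rightarrow> nat) \<Rightarrow> nat \<Rightarrow> real" where
  "xbar J \<xi> N = (\<lambda>i. \<Sum>j\<in>{1..J}. zbar \<xi> N i j)"

definition Sset :: "nat \<Rightarrow> nat \<Rightarrow> nat \<Rightarrow> (nat \<Rightarrow> nat \<Rightarrow> real) \<Rightarrow> (nat \<Rightarrow> nat) \<Rightarrow> (nat \<Rightarrow> real) set" where
  "Sset n I J \<xi> N = {x \<in> vecs I. \<forall>i\<in>{1..I}. sqrt (real n) * x i + xbar J \<xi> N i \<in> \<nat>}"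

definition Zbr :: "nat \<Rightarrow> nat \<Rightarrow> nat \<Rightarrow> (nat \<times> nat) set \<Rightarrow> (nat \<Rightarrow> nat \<Rightarrow> real) \<Rightarrow> (nat \<Rightarrow> nat)
     \<Rightarrow> (nat \<Rightarrow> real) \<Rightarrow> (nat \<Rightarrow> nat \<Rightarrow> real) set" where
  "Zbr n I J E \<xi> N x = {z \<in> arrays E.
     (\<lambda>i j. sqrt (real n) * z i j + zbar \<xi> N i j) \<in> Zws I J E N (\<lambda>i. sqrt (real n) * x i + xbar J \<xi> N i)}"

definition hvec :: "nat \<Rightarrow> (nat \<times> nat) set \<Rightarrow> (nat \<Rightarrow> real) \<Rightarrow> (nat \<Rightarrow> nat \<Rightarrow> real)
     \<Rightarrow> (nat \<Rightarrow> nat) \<Rightarrow> (nat \<Rightarrow> nat \<Rightarrow> real) \<Rightarrow> nat \<Rightarrow> real" where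
  "hvec n E lam mu N \<xi> = (\<lambda>i. (lam i - (\<Sum>j\<in>{j. (i, j) \<in> E}. mu i j * \<xi> i j * real (N j))) / sqrt (real n))"

definition bdrift :: "nat \<Rightarrow> (nat \<times> nat) set \<Rightarrow> (nat \<Rightarrow> real) \<Rightarrow> (nat \<Rightarrow> nat \<Rightarrow> real)
     \<Rightarrow> (nat \<Rightarrow> nat) \<Rightarrow> (nat \<Rightarrow> nat \<Rightarrow> real) \<Rightarrow> (nat \<Rightarrow> real) \<Rightarrow> (nat \<Rightarrow> nat \<Rightarrow> real) \<Rightarrow> nat \<Rightarrow> real" where
  "bdrift n E lam mu N \<xi> x z = (\<lambda>i. hvec n E lam mu N \<xi> i - (\<Sum>j\<in>{j. (i, j) \<in> E}. mu i j * z i j))"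

definition qbr :: "nat \<Rightarrow> (nat \<Rightarrow> real) \<Rightarrow> (nat \<Rightarrow> nat \<Rightarrow> real) \<Rightarrow> nat \<Rightarrow> real" where
  "qbr J x z = (\<lambda>i. x i - (\<Sum>j\<in>{1..J}. z i j))"

definition ybr :: "nat \<Rightarrow> (nat \<Rightarrow> nat \<Rightarrow> real) \<Rightarrow> nat \<Rightarrow> real" where
  "ybr I z = (\<lambda>j. - (\<Sum>i\<in>{1..I}. z i j))"

definition zeta :: "nat \<Rightarrow> nat \<Rightarrow> (nat \<Rightarrow> real) \<Rightarrow> (nat \<Rightarrow> nat \<Rightarrow> real) \<Rightarrow> real" where
  "zeta I J x z = min (\<Sum>i\<in>{1..I}. qbr J x z i) (\<Sum>j\<in>{1..J}. ybr I z j)"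

end

theory Submission
  imports Defs
begin

text \<open>Because the compatibility graph is a tree, an array on its edges is determined by its row
  and column sums, and \<open>\<Psi>\<close> is explicit: the unit margin vector of a vertex \<open>v \<noteq> jh\<close> is
  realised by the array alternating \<open>\<plusminus>1\<close> along the shortest walk from \<open>v\<close> to the root pool
  \<open>jh\<close>. So \<open>B\<^sub>1, B\<^sub>2\<close> are read off these root paths. An off-diagonal entry \<open>(B\<^sub>1)\<^sub>i\<^sub>k\<close> is nonzero
  only if class \<open>i\<close> lies on the root path of \<open>k\<close>, i.e. strictly closer to \<open>jh\<close>; ordering classes
  by decreasing distance, with \<open>ih\<close> last, makes \<open>B\<^sub>1\<close> lower triangular, its diagonal entry for \<open>k\<close>
  being \<open>\<mu>\<^sub>k\<^sub>j\<close> for the first pool \<open>j\<close> on the root path of \<open>k\<close>. The drift formula is then algebra: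
  the rows of \<open>z\<close> sum to \<open>x - q\<close> and its columns to \<open>-y\<close>; normalising \<open>q\<close> and \<open>y\<close> gives \<open>u\<^sup>c\<close>
  and \<open>u\<^sup>s\<close>, and \<open>\<langle>e,x\<rangle> = \<langle>e,q\<rangle> - \<langle>e,y\<rangle>\<close> splits into positive part, negative part and
  \<open>\<zeta> = \<langle>e,q\<rangle> \<and> \<langle>e,y\<rangle>\<close>.\<close>

definition walk :: "('v \<Rightarrow> 'v \<Rightarrow> bool) \<Rightarrow> 'v list \<Rightarrow> bool" where
  "walk R vs \<longleftrightarrow> (\<forall>k < length vs - 1. R (vs ! k) (vs ! (k + 1)))"

lemma walk_Nil [simp]: "walk R []" and walk_singleton [simp]: "walk R [v]"
  by (simp_all add: walk_def)

lemma walk_Cons: "walk R (u # vs) \<longleftrightarrow> (vs \<noteq> [] \<longrightarrow> R u (hd vs)) \<and> walk R vs"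
proof (cases vs)
  case (Cons v ws)
  have "walk R (u # v # ws) \<longleftrightarrow> R u v \<and> walk R (v # ws)"
    by (auto simp: walk_def less_Suc_eq_0_disj)
  then show ?thesis using Cons by simp
qed (simp add: walk_def)

lemma walk_drop: "walk R vs \<Longrightarrow> walk R (drop m vs)"
  by (auto simp: walk_def add.commute add.left_commute)

lemma walk_take: "walk R vs \<Longrightarrow> walk R (take m vs)"
  by (auto simp: walk_def)

lemma walk_mono: "walk R vs \<Longrightarrow> (\<And>u v. R u v \<Longrightarrow> S u v) \<Longrightarrow> walk S vs"
  by (auto simp: walk_def)

lemma rtrancl_imp_walk:
  assumes "(u, v) \<in> {(a, b). R a b}\<^sup>*"
  shows "\<exists>vs. vs \<noteq> [] \<and> hd vs = u \<and> last vs = v \<and> walk R vs"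
  using assms
proof (induction rule: converse_rtrancl_induct)
  case base
  show ?case by (intro exI[of _ "[v]"]) simp
next
  case (step a b)
  then obtain vs where "vs \<noteq> [] \<and> hd vs = b \<and> last vs = v \<and> walk R vs" by blast
  with step(1) show ?case by (intro exI[of _ "a # vs"]) (auto simp: walk_Cons)
qed

lemma bip_tree_edges: "is_bip_tree I J E \<Longrightarrow> E \<subseteq> {1..I} \<times> {1..J}"
  by (simp add: is_bip_tree_def)

lemma bip_tree_walk:
  assumes "is_bip_tree I J E" "u \<in> bip_vertices I J" "v \<in> bip_vertices I J"
  shows "\<exists>vs. vs \<noteq> [] \<and> hd vs = u \<and> last vs = v \<and> walk (bip_adj E) vs"
  using assms by (intro rtrancl_imp_walk) (auto simp: is_bip_tree_def)

lemma bip_tree_no_cycle: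
  assumes "is_bip_tree I J E" "3 \<le> length vs" "distinct vs" "walk (bip_adj E) vs"
  shows "\<not> bip_adj E (last vs) (hd vs)"
  using assms by (auto simp: is_bip_tree_def walk_def)

lemma bip_vertices_Inl: "i \<in> {1..I} \<Longrightarrow> Inl i \<in> bip_vertices I J"
  and bip_vertices_Inr: "j \<in> {1..J} \<Longrightarrow> Inr j \<in> bip_vertices I J"
  by (auto simp: bip_vertices_def)

section \<open>Alternating arrays along walks\<close>

definition edge_indicator :: "nat + nat \<Rightarrow> nat + nat \<Rightarrow> nat \<Rightarrow> nat \<Rightarrow> real" where
  "edge_indicator u v = (\<lambda>i j. if (u = Inl i \<and> v = Inr j) \<or> (u = Inr j \<and> v = Inl i) then 1 else 0)"

text \<open>The array carrying \<open>\<plusminus>1\<close> alternately along a walk: at an interior vertex the two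
  incident entries cancel, so only the end vertices have nonzero margins.\<close>
fun alternating_array :: "(nat + nat) list \<Rightarrow> nat \<Rightarrow> nat \<Rightarrow> real" where
  "alternating_array (u # v # vs) = (\<lambda>i j. edge_indicator u v i j - alternating_array (v # vs) i j)"
| "alternating_array _ = (\<lambda>i j. 0)"

definition margin :: "nat \<Rightarrow> nat \<Rightarrow> (nat \<Rightarrow> nat \<Rightarrow> real) \<Rightarrow> nat + nat \<Rightarrow> real" where
  "margin I J z w = (case w of Inl i \<Rightarrow> \<Sum>j\<in>{1..J}. z i j | Inr j \<Rightarrow> \<Sum>i\<in>{1..I}. z i j)"

lemma alternating_array_notin: "Inl i \<notin> set vs \<Longrightarrow> alternating_array vs i j = 0"
  by (induction vs rule: alternating_array.induct) (auto simp: edge_indicator_def)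

lemma alternating_array_arrays: "walk (bip_adj E) vs \<Longrightarrow> alternating_array vs \<in> arrays E"
proof (induction vs rule: alternating_array.induct)
  case (1 u v vs)
  then have "bip_adj E u v" "alternating_array (v # vs) \<in> arrays E"
    by (auto simp: walk_Cons)
  then show ?case by (auto simp: arrays_def edge_indicator_def bip_adj_def)
qed (auto simp: arrays_def)

lemma margin_diff: "margin I J (\<lambda>i j. a i j - b i j) w = margin I J a w - margin I J b w"
  by (cases w) (auto simp: margin_def sum_subtractf)

lemma margin_add: "margin I J (\<lambda>i j. a i j + b i j) w = margin I J a w + margin I J b w"
  by (cases w) (auto simp: margin_def sum.distrib)

lemma margin_sum:
  "finite K \<Longrightarrow> margin I J (\<lambda>i j. \<Sum>k\<in>K. c k * f k i j) w = (\<Sum>k\<in>K. c k * margin I J (f k) w)"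
  by (cases w) (auto simp: margin_def sum_distrib_left intro: sum.swap)

lemma margin_edge_indicator:
  assumes "E \<subseteq> {1..I} \<times> {1..J}" "bip_adj E u v"
  shows "margin I J (edge_indicator u v) w = (if w = u then 1 else 0) + (if w = v then 1 else 0)"
proof -
  obtain i' j' where e: "(i', j') \<in> E" "(u = Inl i' \<and> v = Inr j') \<or> (u = Inr j' \<and> v = Inl i')"
    using assms(2) unfolding bip_adj_def by blast
  then have "i' \<in> {1..I}" "j' \<in> {1..J}" using assms(1) by auto
  with e show ?thesis
    by (cases w) (auto simp: margin_def edge_indicator_def if_distrib[of "\<lambda>x. x = _"] cong: if_cong)
qed

lemma margin_alternating_array:
  assumes "E \<subseteq> {1..I} \<times> {1..J}"
  shows "walk (bip_adj E) vs \<Longrightarrow> vs \<noteq> [] \<Longrightarrow> margin I J (alternating_array vs) w =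
    (if w = hd vs then 1 else 0) + (-1) ^ length vs * (if w = last vs then 1 else 0)"
proof (induction vs rule: alternating_array.induct)
  case (1 u v vs)
  then have "bip_adj E u v" "walk (bip_adj E) (v # vs)" by (auto simp: walk_Cons)
  with 1 margin_edge_indicator[OF assms] show ?case by (simp add: margin_diff)
qed (auto simp: margin_def split: sum.split)

section \<open>Arrays on a tree are determined by their margins\<close>

lemma sum_zero_other_nonzero:
  assumes "finite A" "a \<in> A" "f a \<noteq> (0::'a::comm_monoid_add)" "sum f A = 0"
  shows "\<exists>b\<in>A. b \<noteq> a \<and> f b \<noteq> 0"
proof (rule ccontr)
  assume "\<not> ?thesis"
  then have "sum f (A - {a}) = 0" by (intro sum.neutral) blast
  then have "sum f A = f a" using assms by (simp add: sum.remove)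
  then show False using assms by simp
qed

definition support_adj :: "(nat \<Rightarrow> nat \<Rightarrow> real) \<Rightarrow> nat + nat \<Rightarrow> nat + nat \<Rightarrow> bool" where
  "support_adj z u v \<longleftrightarrow> (\<exists>i j. z i j \<noteq> 0 \<and> ((u = Inl i \<and> v = Inr j) \<or> (u = Inr j \<and> v = Inl i)))"

lemma support_adj_bip_adj: "z \<in> arrays E \<Longrightarrow> support_adj z u v \<Longrightarrow> bip_adj E u v"
  by (auto simp: support_adj_def bip_adj_def arrays_def)

lemma support_adj_sym: "support_adj z u v \<Longrightarrow> support_adj z v u"
  by (auto simp: support_adj_def)

lemma support_adj_vertex:
  assumes "z \<in> arrays E" "E \<subseteq> {1..I} \<times> {1..J}" "support_adj z u v"
  shows "u \<in> bip_vertices I J"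
proof -
  obtain i j where ij: "z i j \<noteq> 0" "u = Inl i \<or> u = Inr j"
    using assms(3) unfolding support_adj_def by blast
  then have "(i, j) \<in> E" using assms(1) by (auto simp: arrays_def)
  with ij assms(2) show ?thesis by (auto simp: bip_vertices_def)
qed

lemma support_adj_extend:
  assumes z: "z \<in> arrays E" and box: "E \<subseteq> {1..I} \<times> {1..J}"
    and rows: "\<forall>i\<in>{1..I}. (\<Sum>j\<in>{1..J}. z i j) = 0"
    and cols: "\<forall>j\<in>{1..J}. (\<Sum>i\<in>{1..I}. z i j) = 0"
    and wp: "support_adj z w p"
  shows "\<exists>x. support_adj z x w \<and> x \<noteq> p"
proof -
  obtain i j where ij: "z i j \<noteq> 0" "(w = Inl i \<and> p = Inr j) \<or> (w = Inr j \<and> p = Inl i)"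
    using wp unfolding support_adj_def by blast
  then have "(i, j) \<in> E" using z by (auto simp: arrays_def)
  with box have r: "i \<in> {1..I}" "j \<in> {1..J}" by auto
  show ?thesis
  proof (cases "w = Inl i")
    case True
    obtain j' where "j' \<noteq> j" "z i j' \<noteq> 0"
      using sum_zero_other_nonzero[of "{1..J}" j "\<lambda>j. z i j"] rows r ij(1) by auto
    with True ij show ?thesis by (intro exI[of _ "Inr j'"]) (auto simp: support_adj_def)
  next
    case False
    obtain i' where "i' \<noteq> i" "z i' j \<noteq> 0"
      using sum_zero_other_nonzero[of "{1..I}" i "\<lambda>i. z i j"] cols r ij(1) by auto
    with False ij show ?thesis by (intro exI[of _ "Inl i'"]) (auto simp: support_adj_def)
  qed
qed

text \<open>Prepending a support neighbour other than the second vertex either keeps the walk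
  distinct or closes a cycle of the tree.\<close>
lemma support_walks_unbounded:
  assumes tree: "is_bip_tree I J E" and z: "z \<in> arrays E"
    and rows: "\<forall>i\<in>{1..I}. (\<Sum>j\<in>{1..J}. z i j) = 0"
    and cols: "\<forall>j\<in>{1..J}. (\<Sum>i\<in>{1..I}. z i j) = 0"
    and nz: "z i0 j0 \<noteq> 0"
  shows "\<exists>vs. length vs = m + 2 \<and> distinct vs \<and> walk (support_adj z) vs"
proof (induction m)
  case 0
  show ?case using nz by (intro exI[of _ "[Inl i0, Inr j0]"]) (auto simp: walk_Cons support_adj_def)
next
  case (Suc m)
  then obtain vs where vs: "length vs = m + 2" "distinct vs" "walk (support_adj z) vs" by blast
  then obtain w p rest where vs_eq: "vs = w # p # rest"
    by (metis Suc_length_conv add_2_eq_Suc')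
  then have "support_adj z w p" using vs(3) by (simp add: walk_Cons)
  then obtain x where x: "support_adj z x w" "x \<noteq> p"
    using support_adj_extend[OF z bip_tree_edges[OF tree] rows cols] by blast
  show ?case
  proof (cases "x \<in> set vs")
    case False
    with vs x vs_eq show ?thesis by (intro exI[of _ "x # vs"]) (auto simp: walk_Cons)
  next
    case True
    then obtain k where k: "k < length vs" "vs ! k = x" by (meson in_set_conv_nth)
    define cycle where "cycle = take (Suc k) vs"
    have "k \<noteq> 0"
    proof
      assume "k = 0"
      then have "x = w" using k vs_eq by simp
      with x(1) show False by (auto simp: support_adj_def)
    qed
    moreover have "k \<noteq> 1" using k x(2) vs_eq by auto
    ultimately have "3 \<le> length cycle" using k unfolding cycle_def by auto
    moreover have "distinct cycle" using vs(2) unfolding cycle_def by simp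
    moreover have "walk (bip_adj E) cycle"
      unfolding cycle_def using walk_take[OF vs(3)] support_adj_bip_adj[OF z] by (rule walk_mono)
    moreover have "last cycle = x" using k unfolding cycle_def by (simp add: take_Suc_conv_app_nth)
    moreover have "hd cycle = w" unfolding cycle_def vs_eq by simp
    ultimately show ?thesis
      using bip_tree_no_cycle[OF tree] support_adj_bip_adj[OF z x(1)] by blast
  qed
qed

lemma bip_tree_zero_margins:
  assumes tree: "is_bip_tree I J E" and z: "z \<in> arrays E"
    and rows: "\<forall>i\<in>{1..I}. (\<Sum>j\<in>{1..J}. z i j) = 0"
    and cols: "\<forall>j\<in>{1..J}. (\<Sum>i\<in>{1..I}. z i j) = 0"
  shows "z i0 j0 = 0"
proof (rule ccontr)
  assume "z i0 j0 \<noteq> 0"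
  then obtain vs where vs: "length vs = card (bip_vertices I J) + 2" "distinct vs"
      "walk (support_adj z) vs"
    using support_walks_unbounded[OF assms] by blast
  have "set vs \<subseteq> bip_vertices I J"
  proof
    fix v assume "v \<in> set vs"
    then obtain t where t: "t < length vs" "vs ! t = v" by (meson in_set_conv_nth)
    show "v \<in> bip_vertices I J"
    proof (cases "t < length vs - 1")
      case True
      then have "support_adj z (vs ! t) (vs ! (t + 1))" using vs(3) unfolding walk_def by blast
      then show ?thesis using t support_adj_vertex[OF z bip_tree_edges[OF tree]] by blast
    next
      case False
      then have tt: "t = Suc (t - 1)" "t - 1 < length vs - 1" using t vs(1) by auto
      then have "support_adj z (vs ! (t - 1)) (vs ! (t - 1 + 1))" using vs(3) unfolding walk_def by blast
      then have "support_adj z (vs ! t) (vs ! (t - 1))" using tt support_adj_sym by simp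
      then show ?thesis using t support_adj_vertex[OF z bip_tree_edges[OF tree]] by blast
    qed
  qed
  moreover have "finite (bip_vertices I J)" by (simp add: bip_vertices_def)
  ultimately have "length vs \<le> card (bip_vertices I J)"
    using vs(2) by (metis card_mono distinct_card)
  with vs(1) show False by simp
qed

lemma Psi_eqI:
  assumes tree: "is_bip_tree I J E" and z: "z \<in> arrays E"
    and "\<forall>i\<in>{1..I}. (\<Sum>j\<in>{1..J}. z i j) = \<alpha> i" "\<forall>j\<in>{1..J}. (\<Sum>i\<in>{1..I}. z i j) = \<beta> j"
  shows "Psi I J E \<alpha> \<beta> = z"
  unfolding Psi_def
proof (rule the_equality)
  fix z' assume z': "z' \<in> arrays E \<and> (\<forall>i\<in>{1..I}. (\<Sum>j\<in>{1..J}. z' i j) = \<alpha> i)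
      \<and> (\<forall>j\<in>{1..J}. (\<Sum>i\<in>{1..I}. z' i j) = \<beta> j)"
  have "(\<lambda>i j. z' i j - z i j) \<in> arrays E" using z' z by (auto simp: arrays_def)
  then have "z' i j - z i j = 0" for i j
    by (rule bip_tree_zero_margins[OF tree]) (use z' assms in \<open>auto simp: sum_subtractf\<close>)
  then show "z' = z" by (intro ext) simp
qed (use assms in blast)

lemma mvec_unit: "k \<in> {1..L} \<Longrightarrow> mvec L M (\<lambda>l. if l = k then 1 else 0) i = M i k"
  by (simp add: mvec_def if_distrib[of "\<lambda>x. _ * x"] cong: if_cong)

lemma mvec_zero: "mvec L M (\<lambda>l. 0) i = 0"
  by (simp add: mvec_def)

lemma mvec_diff: "mvec L M (\<lambda>l. a l - b l) i = mvec L M a i - mvec L M b i"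
  by (simp add: mvec_def right_diff_distrib sum_subtractf)

lemma mvec_scale: "mvec L M (\<lambda>l. c * a l) i = c * mvec L M a i"
  by (simp add: mvec_def sum_distrib_left mult_ac)

lemma unit_vecs: "k \<in> {1..L} \<Longrightarrow> (\<lambda>l. if l = k then 1 else 0) \<in> vecs L"
  by (auto simp: vecs_def)

lemma exists_simplex_rescaling:
  assumes nonneg: "\<forall>l\<in>{1..L}. 0 \<le> a l" and l0: "l0 \<in> {1..L}"
  shows "\<exists>u\<in>std_simplex L. \<forall>M i. (\<Sum>l\<in>{1..L}. a l) * mvec L M u i = mvec L M a i"
proof (cases "(\<Sum>l\<in>{1..L}. a l) = 0")
  case True
  then have "\<forall>l\<in>{1..L}. a l = 0"
    using sum_nonneg_eq_0_iff[of "{1..L}" a] nonneg by auto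
  then have "mvec L M a i = 0" for M i by (simp add: mvec_def)
  moreover have "(\<lambda>l. if l = l0 then 1 else 0) \<in> std_simplex L"
    using l0 by (simp add: std_simplex_def unit_vecs)
  ultimately show ?thesis using True by auto
next
  case False
  define S where "S = (\<Sum>l\<in>{1..L}. a l)"
  have S: "0 < S" using False nonneg sum_nonneg[of "{1..L}" a] unfolding S_def by force
  define u where "u l = (if l \<in> {1..L} then a l / S else 0)" for l
  have "(\<Sum>l\<in>{1..L}. u l) = 1"
    using S by (simp add: u_def S_def flip: sum_divide_distrib)
  then have "u \<in> std_simplex L"
    using nonneg S by (auto simp: std_simplex_def vecs_def u_def)
  moreover have "S * mvec L M u i = mvec L M a i" for M i
    using S by (simp add: mvec_def u_def sum_distrib_left)
  ultimately show ?thesis unfolding S_def by blast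
qed

lemma Zbr_idle_nonneg:
  assumes crp_sum: "\<And>j. j \<in> {1..J} \<Longrightarrow> (\<Sum>i\<in>{1..I}. \<xi> i j) = 1"
    and n: "1 \<le> n" and z: "z \<in> Zbr n I J E \<xi> N x"
  shows "\<forall>i\<in>{1..I}. 0 \<le> qbr J x z i" and "\<forall>j\<in>{1..J}. 0 \<le> ybr I z j"
proof -
  define s where "s = sqrt (real n)"
  have s: "0 < s" using n unfolding s_def by simp
  have Z: "(\<lambda>i j. s * z i j + zbar \<xi> N i j) \<in> Zws I J E N (\<lambda>i. s * x i + xbar J \<xi> N i)"
    using z unfolding Zbr_def s_def by blast
  show "\<forall>i\<in>{1..I}. 0 \<le> qbr J x z i"
  proof
    fix i assume i: "i \<in> {1..I}"
    have "0 \<le> (s * x i + xbar J \<xi> N i) - (\<Sum>j\<in>{1..J}. s * z i j + zbar \<xi> N i j)"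
      using Z i unfolding Zws_def Let_def by blast
    also have "\<dots> = s * qbr J x z i"
      by (simp add: xbar_def qbr_def sum.distrib sum_distrib_left right_diff_distrib)
    finally show "0 \<le> qbr J x z i" using s by (simp add: zero_le_mult_iff)
  qed
  show "\<forall>j\<in>{1..J}. 0 \<le> ybr I z j"
  proof
    fix j assume j: "j \<in> {1..J}"
    have "0 \<le> real (N j) - (\<Sum>i\<in>{1..I}. s * z i j + zbar \<xi> N i j)"
      using Z j unfolding Zws_def Let_def by blast
    also have "\<dots> = s * ybr I z j + (1 - (\<Sum>i\<in>{1..I}. \<xi> i j)) * real (N j)"
      by (simp add: ybr_def zbar_def sum.distrib sum_distrib_left sum_distrib_right algebra_simps)
    finally show "0 \<le> ybr I z j" using s crp_sum[OF j] by (simp add: zero_le_mult_iff)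
  qed
qed

lemma margins_Dset:
  assumes "z \<in> arrays E" "E \<subseteq> {1..I} \<times> {1..J}"
  shows "((\<lambda>i. \<Sum>j\<in>{1..J}. z i j), (\<lambda>j. \<Sum>i\<in>{1..I}. z i j)) \<in> Dset I J"
proof -
  have "z i j = 0" if "i \<notin> {1..I} \<or> j \<notin> {1..J}" for i j
    using assms that unfolding arrays_def by blast
  then show ?thesis unfolding Dset_def vecs_def by (auto intro: sum.swap)
qed

section \<open>Triangularising permutations\<close>

lemma sorting_permutation:
  fixes g :: "nat \<Rightarrow> 'a::linorder"
  shows "\<exists>\<sigma>. bij_betw \<sigma> {1..n} {1..n} \<and>
    (\<forall>k\<in>{1..n}. \<forall>l\<in>{1..n}. k \<le> l \<longrightarrow> g (\<sigma> k) \<le> g (\<sigma> l))"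
proof -
  define L where "L = sort_key g [1..<n+1]"
  have L: "distinct L" "set L = {1..n}" "length L = n" "sorted (map g L)"
    unfolding L_def by auto
  have "bij_betw (\<lambda>k. k - 1) {1..n} {..<n}"
    by (rule bij_betw_byWitness[where f' = Suc]) auto
  moreover have "bij_betw ((!) L) {..<n} {1..n}"
    using bij_betw_nth[OF L(1)] L by simp
  ultimately have "bij_betw (\<lambda>k. L ! (k - 1)) {1..n} {1..n}"
    using bij_betw_trans unfolding comp_def by blast
  moreover have "g (L ! (k - 1)) \<le> g (L ! (l - 1))" if "k \<in> {1..n}" "l \<in> {1..n}" "k \<le> l" for k l
    using sorted_nth_mono[OF L(4), of "k - 1" "l - 1"] that L(3) by simp
  ultimately show ?thesis by blast
qed

lemma triangular_permutation:
  fixes g :: "nat \<Rightarrow> 'a::linorder" and B :: "nat \<Rightarrow> nat \<Rightarrow> 'b::zero"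
  assumes top: "i0 \<in> {1..n}" "\<And>k. k \<in> {1..n} \<Longrightarrow> k \<noteq> i0 \<Longrightarrow> g k < g i0"
    and decr: "\<And>i k. i \<in> {1..n} \<Longrightarrow> k \<in> {1..n} \<Longrightarrow> i \<noteq> k \<Longrightarrow> B i k \<noteq> 0 \<Longrightarrow> g k < g i"
  shows "\<exists>\<sigma>. bij_betw \<sigma> {1..n} {1..n} \<and> \<sigma> n = i0 \<and>
    (\<forall>k\<in>{1..n}. \<forall>l\<in>{1..n}. k < l \<longrightarrow> B (\<sigma> k) (\<sigma> l) = 0)"
proof -
  obtain \<sigma> where bij: "bij_betw \<sigma> {1..n} {1..n}"
    and mono: "\<And>k l. k \<in> {1..n} \<Longrightarrow> l \<in> {1..n} \<Longrightarrow> k \<le> l \<Longrightarrow> g (\<sigma> k) \<le> g (\<sigma> l)"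
    using sorting_permutation[of n g] by blast
  have n: "n \<in> {1..n}" using top(1) by auto
  obtain p where p: "p \<in> {1..n}" "\<sigma> p = i0"
    using top(1) bij by (metis bij_betw_def imageE)
  have "\<sigma> n = i0"
  proof (rule ccontr)
    assume "\<sigma> n \<noteq> i0"
    then have "g (\<sigma> n) < g i0" using top(2) bij_betw_apply[OF bij n] by blast
    moreover have "g i0 \<le> g (\<sigma> n)" using mono[OF p(1) n] p by auto
    ultimately show False by simp
  qed
  moreover have "B (\<sigma> k) (\<sigma> l) = 0" if kl: "k \<in> {1..n}" "l \<in> {1..n}" "k < l" for k l
  proof (rule ccontr)
    assume "B (\<sigma> k) (\<sigma> l) \<noteq> 0"
    moreover have "\<sigma> k \<noteq> \<sigma> l"
      using bij_betw_imp_inj_on[OF bij] kl by (auto dest: inj_onD)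
    ultimately have "g (\<sigma> l) < g (\<sigma> k)"
      using decr bij_betw_apply[OF bij] kl by blast
    with mono[OF kl(1,2)] kl(3) show False by simp
  qed
  ultimately show ?thesis using bij by blast
qed

section \<open>Root paths, \<open>\<Psi>\<close> and the matrices \<open>B\<^sub>1, B\<^sub>2\<close>\<close>

locale rooted_bip_tree =
  fixes I J :: nat and E :: "(nat \<times> nat) set" and jh :: nat
  assumes tree: "is_bip_tree I J E" and root: "jh \<in> {1..J}"
begin

lemma edges: "E \<subseteq> {1..I} \<times> {1..J}"
  using bip_tree_edges[OF tree] .

lemma finite_neighbours: "finite {j. (i, j) \<in> E}"
  by (rule finite_subset[of _ "{1..J}"]) (use edges in auto)

definition walks_to_root :: "nat + nat \<Rightarrow> (nat + nat) list set" where
  "walks_to_root v = {vs. vs \<noteq> [] \<and> hd vs = v \<and> last vs = Inr jh \<and> walk (bip_adj E) vs}"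

definition root_path :: "nat + nat \<Rightarrow> (nat + nat) list" where
  "root_path v = arg_min length (\<lambda>vs. vs \<in> walks_to_root v)"

lemma root_path_shortest:
  "vs \<in> walks_to_root v \<Longrightarrow> root_path v \<in> walks_to_root v \<and> length (root_path v) \<le> length vs"
  unfolding root_path_def by (metis arg_min_nat_lemma)

lemma root_path_walks_to_root: "v \<in> bip_vertices I J \<Longrightarrow> root_path v \<in> walks_to_root v"
  using bip_tree_walk[OF tree _ bip_vertices_Inr[OF root]] root_path_shortest
  unfolding walks_to_root_def by blast

lemma drop_walks_to_root:
  "vs \<in> walks_to_root v \<Longrightarrow> m < length vs \<Longrightarrow> drop m vs \<in> walks_to_root (vs ! m)"
  unfolding walks_to_root_def by (auto simp: hd_drop_conv_nth walk_drop)

lemma root_path_arrays: "v \<in> bip_vertices I J \<Longrightarrow> alternating_array (root_path v) \<in> arrays E"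
  using root_path_walks_to_root alternating_array_arrays unfolding walks_to_root_def by blast

lemma margin_root_path:
  assumes "v \<in> bip_vertices I J" "w \<noteq> Inr jh"
  shows "margin I J (alternating_array (root_path v)) w = (if w = v then 1 else 0)"
  using root_path_walks_to_root[OF assms(1)] margin_alternating_array[OF edges, of "root_path v" w] assms(2)
  unfolding walks_to_root_def by auto

definition Psi_paths :: "(nat \<Rightarrow> real) \<Rightarrow> (nat \<Rightarrow> real) \<Rightarrow> nat \<Rightarrow> nat \<Rightarrow> real" where
  "Psi_paths \<alpha> \<beta> = (\<lambda>i j. (\<Sum>k\<in>{1..I}. \<alpha> k * alternating_array (root_path (Inl k)) i j)
     + (\<Sum>l\<in>{1..J}-{jh}. \<beta> l * alternating_array (root_path (Inr l)) i j))"

lemma Psi_paths_arrays: "Psi_paths \<alpha> \<beta> \<in> arrays E"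
  using root_path_arrays[OF bip_vertices_Inl] root_path_arrays[OF bip_vertices_Inr]
  by (auto simp: arrays_def Psi_paths_def)

lemma margin_Psi_paths:
  assumes "w \<noteq> Inr jh"
  shows "margin I J (Psi_paths \<alpha> \<beta>) w = (\<Sum>k\<in>{1..I}. \<alpha> k * (if w = Inl k then 1 else 0))
    + (\<Sum>l\<in>{1..J}-{jh}. \<beta> l * (if w = Inr l then 1 else 0))"
proof -
  have "margin I J (Psi_paths \<alpha> \<beta>) w =
      (\<Sum>k\<in>{1..I}. \<alpha> k * margin I J (alternating_array (root_path (Inl k))) w)
      + (\<Sum>l\<in>{1..J}-{jh}. \<beta> l * margin I J (alternating_array (root_path (Inr l))) w)"
    unfolding Psi_paths_def by (simp add: margin_add margin_sum)
  then show ?thesis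
    using assms by (simp add: margin_root_path bip_vertices_Inl bip_vertices_Inr)
qed

lemma Psi_paths_rows: "i \<in> {1..I} \<Longrightarrow> (\<Sum>j\<in>{1..J}. Psi_paths \<alpha> \<beta> i j) = \<alpha> i"
  using margin_Psi_paths[of "Inl i" \<alpha> \<beta>] by (simp add: margin_def if_distrib[of "\<lambda>x. _ * x"] cong: if_cong)

lemma Psi_paths_cols: "j \<in> {1..J} \<Longrightarrow> j \<noteq> jh \<Longrightarrow> (\<Sum>i\<in>{1..I}. Psi_paths \<alpha> \<beta> i j) = \<beta> j"
  using margin_Psi_paths[of "Inr j" \<alpha> \<beta>] by (simp add: margin_def if_distrib[of "\<lambda>x. _ * x"] cong: if_cong)

lemma Psi_paths_col_root:
  assumes "(\<alpha>, \<beta>) \<in> Dset I J"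
  shows "(\<Sum>i\<in>{1..I}. Psi_paths \<alpha> \<beta> i jh) = \<beta> jh"
proof -
  have "(\<Sum>j\<in>{1..J}-{jh}. \<Sum>i\<in>{1..I}. Psi_paths \<alpha> \<beta> i j) = (\<Sum>j\<in>{1..J}-{jh}. \<beta> j)"
    by (intro sum.cong refl Psi_paths_cols) auto
  then have "(\<Sum>i\<in>{1..I}. Psi_paths \<alpha> \<beta> i jh) + (\<Sum>j\<in>{1..J}-{jh}. \<beta> j)
      = (\<Sum>j\<in>{1..J}. \<Sum>i\<in>{1..I}. Psi_paths \<alpha> \<beta> i j)"
    using root by (simp add: sum.remove)
  also have "\<dots> = (\<Sum>i\<in>{1..I}. \<Sum>j\<in>{1..J}. Psi_paths \<alpha> \<beta> i j)"
    by (rule sum.swap)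
  also have "\<dots> = (\<Sum>i\<in>{1..I}. \<alpha> i)"
    by (intro sum.cong refl Psi_paths_rows) auto
  also have "\<dots> = (\<Sum>j\<in>{1..J}. \<beta> j)"
    using assms by (simp add: Dset_def)
  also have "\<dots> = \<beta> jh + (\<Sum>j\<in>{1..J}-{jh}. \<beta> j)"
    using root by (simp add: sum.remove)
  finally show ?thesis by simp
qed

lemma Psi_eq_Psi_paths:
  assumes "(\<alpha>, \<beta>) \<in> Dset I J"
  shows "Psi I J E \<alpha> \<beta> = Psi_paths \<alpha> \<beta>"
proof (rule Psi_eqI[OF tree Psi_paths_arrays])
  show "\<forall>j\<in>{1..J}. (\<Sum>i\<in>{1..I}. Psi_paths \<alpha> \<beta> i j) = \<beta> j"
    using Psi_paths_cols Psi_paths_col_root[OF assms] by blast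
qed (use Psi_paths_rows in blast)

definition B1_paths :: "(nat \<Rightarrow> nat \<Rightarrow> real) \<Rightarrow> nat \<Rightarrow> nat \<Rightarrow> real" where
  "B1_paths mu = (\<lambda>i k. if i \<in> {1..I} \<and> k \<in> {1..I}
     then \<Sum>j\<in>{j. (i, j) \<in> E}. mu i j * alternating_array (root_path (Inl k)) i j else 0)"

definition B2_paths :: "(nat \<Rightarrow> nat \<Rightarrow> real) \<Rightarrow> nat \<Rightarrow> nat \<Rightarrow> real" where
  "B2_paths mu = (\<lambda>i l. if i \<in> {1..I} \<and> l \<in> {1..J} \<and> l \<noteq> jh
     then \<Sum>j\<in>{j. (i, j) \<in> E}. mu i j * alternating_array (root_path (Inr l)) i j else 0)"

lemma service_rate_Psi:
  assumes ab: "(\<alpha>, \<beta>) \<in> Dset I J" and i: "i \<in> {1..I}"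
  shows "(\<Sum>j\<in>{j. (i, j) \<in> E}. mu i j * Psi I J E \<alpha> \<beta> i j)
    = mvec I (B1_paths mu) \<alpha> i + mvec J (B2_paths mu) \<beta> i"
proof -
  have "mvec J (B2_paths mu) \<beta> i = (\<Sum>l\<in>{1..J}-{jh}. B2_paths mu i l * \<beta> l)"
    unfolding mvec_def using root by (simp add: sum.remove B2_paths_def)
  then show ?thesis
    using i unfolding Psi_eq_Psi_paths[OF ab] Psi_paths_def mvec_def B1_paths_def
    by (simp add: B2_paths_def distrib_left sum.distrib sum_distrib_left sum_distrib_right
        mult_ac sum.swap[of _ "{j. (i, j) \<in> E}"])
qed

definition is_Bpair :: "(nat \<Rightarrow> nat \<Rightarrow> real) \<Rightarrow> (nat \<Rightarrow> nat \<Rightarrow> real) \<Rightarrow> (nat \<Rightarrow> nat \<Rightarrow> real) \<Rightarrow> bool" where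
  "is_Bpair mu B1 B2 \<longleftrightarrow> B1 \<in> mats I I \<and> B2 \<in> mats I J \<and> (\<forall>i. B2 i jh = 0) \<and>
     (\<forall>(\<alpha>, \<beta>) \<in> Dset I J. \<forall>i\<in>{1..I}.
        (\<Sum>j\<in>{j. (i, j) \<in> E}. mu i j * Psi I J E \<alpha> \<beta> i j) = mvec I B1 \<alpha> i + mvec J B2 \<beta> i)"

lemma is_Bpair_paths: "is_Bpair mu (B1_paths mu) (B2_paths mu)"
  unfolding is_Bpair_def using service_rate_Psi by (auto simp: mats_def B1_paths_def B2_paths_def)

text \<open>Testing against \<open>(e\<^sub>k, e\<^sub>j\<^sub>h)\<close> and \<open>(0, e\<^sub>l - e\<^sub>j\<^sub>h)\<close> recovers every entry.\<close>
lemma is_Bpair_unique: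
  assumes C: "is_Bpair mu C1 C2" and D: "is_Bpair mu D1 D2"
  shows "C1 = D1 \<and> C2 = D2"
proof -
  let ?e = "\<lambda>k l. if l = k then 1 else (0::real)"
  have same: "mvec I C1 \<alpha> i + mvec J C2 \<beta> i = mvec I D1 \<alpha> i + mvec J D2 \<beta> i"
    if "(\<alpha>, \<beta>) \<in> Dset I J" "i \<in> {1..I}" for \<alpha> \<beta> i
    using C D that unfolding is_Bpair_def by fastforce
  have c: "C1 \<in> mats I I" "C2 \<in> mats I J" "\<forall>i. C2 i jh = 0"
    and d: "D1 \<in> mats I I" "D2 \<in> mats I J" "\<forall>i. D2 i jh = 0"
    using C D unfolding is_Bpair_def by auto
  have "C1 i k = D1 i k" for i k
  proof (cases "i \<in> {1..I} \<and> k \<in> {1..I}")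
    case True
    then have "(?e k, ?e jh) \<in> Dset I J"
      using root by (simp add: Dset_def unit_vecs)
    from same[OF this] True show ?thesis using c d root by (simp add: mvec_unit)
  qed (use c d in \<open>auto simp: mats_def\<close>)
  moreover have "C2 i l = D2 i l" for i l
  proof (cases "i \<in> {1..I} \<and> l \<in> {1..J} \<and> l \<noteq> jh")
    case True
    then have "(\<lambda>_. 0, \<lambda>m. ?e l m - ?e jh m) \<in> Dset I J"
      using root by (auto simp: Dset_def vecs_def sum_subtractf)
    from same[OF this] True show ?thesis using c d root by (simp add: mvec_unit mvec_zero mvec_diff)
  qed (use c d in \<open>auto simp: mats_def\<close>)
  ultimately show ?thesis by (auto intro!: ext)
qed

lemma Bmats_eq: "Bmats I J E mu jh = (B1_paths mu, B2_paths mu)"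
proof -
  have "Bmats I J E mu jh = (THE x. case x of (B1, B2) \<Rightarrow> is_Bpair mu B1 B2)"
    unfolding Bmats_def is_Bpair_def by simp
  also have "\<dots> = (B1_paths mu, B2_paths mu)"
  proof (rule the_equality)
    fix x assume "case x of (B1, B2) \<Rightarrow> is_Bpair mu B1 B2"
    then show "x = (B1_paths mu, B2_paths mu)"
      using is_Bpair_unique[OF _ is_Bpair_paths] by (cases x) auto
  qed (simp add: is_Bpair_paths)
  finally show ?thesis .
qed

lemma B1mat_eq: "B1mat I J E mu jh = B1_paths mu"
  and B2mat_eq: "B2mat I J E mu jh = B2_paths mu"
  by (simp_all add: B1mat_def B2mat_def Bmats_eq)

lemma root_path_Inl:
  assumes k: "k \<in> {1..I}"
  obtains j rest where "root_path (Inl k) = Inl k # Inr j # rest" "(k, j) \<in> E"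
    "Inl k \<notin> set (Inr j # rest)"
proof -
  have W: "root_path (Inl k) \<in> walks_to_root (Inl k)"
    using root_path_walks_to_root bip_vertices_Inl k by blast
  then obtain vs where P: "root_path (Inl k) = Inl k # vs"
    unfolding walks_to_root_def by (cases "root_path (Inl k)") auto
  moreover have "vs \<noteq> []" using W P unfolding walks_to_root_def by auto
  then obtain v rest where vs: "vs = v # rest" by (cases vs) auto
  moreover have "bip_adj E (Inl k) v" using W P vs unfolding walks_to_root_def by (simp add: walk_Cons)
  then obtain j where j: "v = Inr j" "(k, j) \<in> E" unfolding bip_adj_def by auto
  moreover have "Inl k \<notin> set vs"
  proof
    assume "Inl k \<in> set vs"
    then obtain m where m: "m < length vs" "vs ! m = Inl k" by (meson in_set_conv_nth)
    then have "drop (Suc m) (root_path (Inl k)) \<in> walks_to_root (Inl k)"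
      using drop_walks_to_root[OF W, of "Suc m"] P by simp
    with root_path_shortest have "length (root_path (Inl k)) \<le> length vs - m" by fastforce
    with m P show False by simp
  qed
  ultimately show ?thesis using that by blast
qed

definition depth :: "nat \<Rightarrow> nat" where
  "depth k = length (root_path (Inl k))"

lemma depth_ge_2: "k \<in> {1..I} \<Longrightarrow> 2 \<le> depth k"
  by (elim root_path_Inl) (simp add: depth_def)

lemma root_path_adjacent:
  assumes "(i, jh) \<in> E"
  shows "root_path (Inl i) = [Inl i, Inr jh]"
proof -
  have i: "i \<in> {1..I}" using assms edges by auto
  have "[Inl i, Inr jh] \<in> walks_to_root (Inl i)"
    using assms unfolding walks_to_root_def by (auto simp: walk_Cons bip_adj_def)
  then have "length (root_path (Inl i)) \<le> 2" using root_path_shortest by fastforce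
  moreover obtain j rest where "root_path (Inl i) = Inl i # Inr j # rest"
    using root_path_Inl[OF i] by blast
  moreover have "last (root_path (Inl i)) = Inr jh"
    using root_path_walks_to_root[OF bip_vertices_Inl[OF i]] unfolding walks_to_root_def by simp
  ultimately show ?thesis by auto
qed

lemma depth_less:
  assumes k: "k \<in> {1..I}" and "i \<noteq> k" and on_path: "Inl i \<in> set (root_path (Inl k))"
  shows "depth i < depth k"
proof -
  have W: "root_path (Inl k) \<in> walks_to_root (Inl k)"
    using root_path_walks_to_root bip_vertices_Inl k by blast
  obtain m where m: "m < length (root_path (Inl k))" "root_path (Inl k) ! m = Inl i"
    using on_path by (meson in_set_conv_nth)
  have "m \<noteq> 0"
  proof
    assume "m = 0"
    then have "Inl i = Inl k" using W m unfolding walks_to_root_def by (auto simp: hd_conv_nth)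
    with \<open>i \<noteq> k\<close> show False by simp
  qed
  moreover have "drop m (root_path (Inl k)) \<in> walks_to_root (Inl i)"
    using drop_walks_to_root[OF W m(1)] m(2) by simp
  then have "depth i \<le> length (root_path (Inl k)) - m"
    unfolding depth_def using root_path_shortest by fastforce
  ultimately show ?thesis using m unfolding depth_def by simp
qed

lemma B1_paths_nonzero_imp_depth_less:
  assumes "i \<in> {1..I}" "k \<in> {1..I}" "i \<noteq> k" "B1_paths mu i k \<noteq> 0"
  shows "depth i < depth k"
proof (rule depth_less[OF assms(2,3)], rule ccontr)
  assume "Inl i \<notin> set (root_path (Inl k))"
  then have "B1_paths mu i k = 0" by (simp add: B1_paths_def alternating_array_notin)
  with assms(4) show False by simp
qed

lemma B1_paths_diag:
  assumes k: "k \<in> {1..I}"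
  obtains j where "(k, j) \<in> E" "B1_paths mu k k = mu k j"
proof -
  obtain j rest where P: "root_path (Inl k) = Inl k # Inr j # rest" "(k, j) \<in> E"
      "Inl k \<notin> set (Inr j # rest)"
    using root_path_Inl[OF k] by blast
  have "B1_paths mu k k = (\<Sum>j'\<in>{j'. (k, j') \<in> E}. if j' = j then mu k j' else 0)"
    unfolding B1_paths_def using k P(1) alternating_array_notin[OF P(3)]
    by (auto simp: edge_indicator_def intro!: sum.cong)
  also have "\<dots> = mu k j" using P(2) finite_neighbours by simp
  finally show ?thesis using that P(2) by blast
qed

lemma B1_paths_adjacent: "(i, jh) \<in> E \<Longrightarrow> B1_paths mu i i = mu i jh"
  using root_path_adjacent edges
  by (auto simp: B1_paths_def edge_indicator_def if_distrib[of "\<lambda>x. _ * x"] finite_neighbours cong: if_cong)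

lemma B1_paths_triangular:
  assumes hat: "(ih, jh) \<in> E"
  shows "\<exists>\<sigma>. bij_betw \<sigma> {1..I} {1..I} \<and> \<sigma> I = ih \<and>
    (\<forall>k\<in>{1..I}. \<forall>l\<in>{1..I}. k < l \<longrightarrow> B1_paths mu (\<sigma> k) (\<sigma> l) = 0)"
proof (rule triangular_permutation)
  let ?g = "\<lambda>k. if k = ih then 1 else - int (depth k)"
  have depth_ih: "depth ih = 2" using root_path_adjacent[OF hat] by (simp add: depth_def)
  show "ih \<in> {1..I}" using hat edges by auto
  show "?g k < ?g ih" if "k \<noteq> ih" for k using that by simp
  show "?g k < ?g i" if "i \<in> {1..I}" "k \<in> {1..I}" "i \<noteq> k" "B1_paths mu i k \<noteq> 0" for i k
  proof -
    have "depth i < depth k" using B1_paths_nonzero_imp_depth_less[OF that] .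
    moreover have "k \<noteq> ih" using calculation depth_ih depth_ge_2[OF that(1)] by auto
    ultimately show ?thesis by auto
  qed
qed

lemma drift_decomposition:
  assumes crp_sum: "\<And>j. j \<in> {1..J} \<Longrightarrow> (\<Sum>i\<in>{1..I}. \<xi> i j) = 1"
    and n: "1 \<le> n" and I: "1 \<le> I" and z: "z \<in> Zbr n I J E \<xi> N x"
  shows "\<exists>uc us. uc \<in> std_simplex I \<and> us \<in> std_simplex J \<and>
    (\<forall>i\<in>{1..I}. bdrift n E lam mu N \<xi> x z i =
       hvec n E lam mu N \<xi> i
       - mvec I (B1mat I J E mu jh) (\<lambda>k. x k - posp (\<Sum>l\<in>{1..I}. x l) * uc k) i
       + mvec J (B2mat I J E mu jh) us i * negp (\<Sum>l\<in>{1..I}. x l)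
       + zeta I J x z * (mvec I (B1mat I J E mu jh) uc i + mvec J (B2mat I J E mu jh) us i))"
proof -
  let ?q = "qbr J x z" and ?y = "ybr I z"
  let ?B1 = "B1mat I J E mu jh" and ?B2 = "B2mat I J E mu jh"
  define Q where "Q = (\<Sum>i\<in>{1..I}. ?q i)"
  define Y where "Y = (\<Sum>j\<in>{1..J}. ?y j)"
  obtain uc where uc: "uc \<in> std_simplex I" "\<And>M i. Q * mvec I M uc i = mvec I M ?q i"
    using exists_simplex_rescaling[OF Zbr_idle_nonneg(1)[OF crp_sum n z], of 1] I
    unfolding Q_def by auto
  obtain us where us: "us \<in> std_simplex J" "\<And>M i. Y * mvec J M us i = mvec J M ?y i"
    using exists_simplex_rescaling[OF Zbr_idle_nonneg(2)[OF crp_sum n z] root]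
    unfolding Y_def by auto
  have zE: "z \<in> arrays E" using z unfolding Zbr_def by blast
  note D = margins_Dset[OF zE edges]
  have rows: "(\<lambda>i. \<Sum>j\<in>{1..J}. z i j) = (\<lambda>i. x i - ?q i)" by (simp add: qbr_def)
  have cols: "(\<lambda>j. \<Sum>i\<in>{1..I}. z i j) = (\<lambda>j. - ?y j)" by (simp add: ybr_def)
  have sum_x: "(\<Sum>l\<in>{1..I}. x l) = Q - Y"
    using D unfolding Dset_def rows cols Q_def Y_def by (simp add: sum_subtractf sum_negf)
  have Psi_z: "Psi I J E (\<lambda>i. x i - ?q i) (\<lambda>j. - ?y j) = z"
    unfolding rows [symmetric] cols [symmetric] by (rule Psi_eqI[OF tree zE]) auto
  have "bdrift n E lam mu N \<xi> x z i =
       hvec n E lam mu N \<xi> i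
       - mvec I ?B1 (\<lambda>k. x k - posp (Q - Y) * uc k) i
       + mvec J ?B2 us i * negp (Q - Y)
       + min Q Y * (mvec I ?B1 uc i + mvec J ?B2 us i)" if i: "i \<in> {1..I}" for i
  proof -
    have "(\<Sum>j\<in>{j. (i, j) \<in> E}. mu i j * z i j)
        = mvec I ?B1 (\<lambda>k. x k - ?q k) i + mvec J ?B2 (\<lambda>j. - ?y j) i"
      using service_rate_Psi[OF D[unfolded rows cols] i, of mu] Psi_z
      by (simp add: B1mat_eq B2mat_eq)
    also have "\<dots> = mvec I ?B1 x i - Q * mvec I ?B1 uc i - Y * mvec J ?B2 us i"
      using mvec_scale[of J ?B2 "-1" ?y i] by (simp add: mvec_diff uc(2) us(2))
    finally have service: "(\<Sum>j\<in>{j. (i, j) \<in> E}. mu i j * z i j)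
        = mvec I ?B1 x i - Q * mvec I ?B1 uc i - Y * mvec J ?B2 us i" .
    have scaled: "mvec I ?B1 (\<lambda>k. x k - posp (Q - Y) * uc k) i
        = mvec I ?B1 x i - posp (Q - Y) * mvec I ?B1 uc i"
      by (simp add: mvec_diff mvec_scale)
    show ?thesis
      unfolding bdrift_def service scaled
      by (simp add: posp_def negp_def min_def max_def algebra_simps)
  qed
  moreover have "zeta I J x z = min Q Y" unfolding zeta_def Q_def Y_def ..
  ultimately show ?thesis using uc(1) us(1) unfolding sum_x by auto
qed

end

theorem proposition1:
  fixes I J :: nat and E :: "(nat \<times> nat) set"
    and lam :: "nat \<Rightarrow> nat \<Rightarrow> real"          (* lam n i = lambda^n_i *)
    and mu :: "nat \<Rightarrow> nat \<Rightarrow> nat \<Rightarrow> real"     (* mu n i j = mu^n_ij *)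
    and N :: "nat \<Rightarrow> nat \<Rightarrow> nat"             (* N n j = N^n_j *)
    and laml :: "nat \<Rightarrow> real" and nu :: "nat \<Rightarrow> real" and mul :: "nat \<Rightarrow> nat \<Rightarrow> real"
    and \<xi>s :: "nat \<Rightarrow> nat \<Rightarrow> real" and n ih jh :: nat
  assumes tree: "is_bip_tree I J E"
    and lam_pos: "\<And>m i. 1 \<le> m \<Longrightarrow> i \<in> {1..I} \<Longrightarrow> 0 < lam m i"
    and mu_pos: "\<And>m i j. 1 \<le> m \<Longrightarrow> (i, j) \<in> E \<Longrightarrow> 0 < mu m i j"
    and lam_lim: "\<And>i. i \<in> {1..I} \<Longrightarrow> 0 < laml i \<and> (\<lambda>m. lam m i / real m) \<longlonglongrightarrow> laml i"
    and N_lim: "\<And>j. j \<in> {1..J} \<Longrightarrow> 0 < nu j \<and> (\<lambda>m. real (N m j) / real m) \<longlonglongrightarrow> nu j"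
    and mu_lim: "\<And>i j. (i, j) \<in> E \<Longrightarrow> 0 < mul i j \<and> (\<lambda>m. mu m i j) \<longlonglongrightarrow> mul i j"
    and lam_conv: "\<And>i. i \<in> {1..I} \<Longrightarrow> convergent (\<lambda>m. (lam m i - real m * laml i) / sqrt (real m))"
    and mu_conv: "\<And>i j. (i, j) \<in> E \<Longrightarrow> convergent (\<lambda>m. sqrt (real m) * (mu m i j - mul i j))"
    and N_conv: "\<And>j. j \<in> {1..J} \<Longrightarrow> convergent (\<lambda>m. sqrt (real m) * (real (N m j) / real m - nu j))"
    and crp: "unique_lp_solution I J E laml mul nu \<xi>s"
    and crp_sum: "\<And>j. j \<in> {1..J} \<Longrightarrow> (\<Sum>i\<in>{1..I}. \<xi>s i j) = 1"
    and crp_pos: "\<And>i j. (i, j) \<in> E \<Longrightarrow> 0 < \<xi>s i j"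
    and n_pos: "1 \<le> n"
    and hat: "(ih, jh) \<in> E"
  shows "(\<forall>x \<in> Sset n I J \<xi>s (N n). \<forall>z \<in> Zbr n I J E \<xi>s (N n) x.
            \<exists>uc us. uc \<in> std_simplex I \<and> us \<in> std_simplex J \<and>
              (\<forall>i\<in>{1..I}.
                 bdrift n E (lam n) (mu n) (N n) \<xi>s x z i =
                   hvec n E (lam n) (mu n) (N n) \<xi>s i
                   - mvec I (B1mat I J E (mu n) jh)
                       (\<lambda>k. x k - posp (\<Sum>l\<in>{1..I}. x l) * uc k) i
                   + mvec J (B2mat I J E (mu n) jh) us i * negp (\<Sum>l\<in>{1..I}. x l)
                   + zeta I J x z * (mvec I (B1mat I J E (mu n) jh) uc i
                                     + mvec J (B2mat I J E (mu n) jh) us i)))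
         \<and> (\<forall>i. B2mat I J E (mu n) jh i jh = 0)
         \<and> (\<exists>\<sigma>. bij_betw \<sigma> {1..I} {1..I} \<and> \<sigma> I = ih \<and>
              (\<forall>k\<in>{1..I}. \<forall>l\<in>{1..I}. k < l \<longrightarrow> B1mat I J E (mu n) jh (\<sigma> k) (\<sigma> l) = 0) \<and>
              (\<forall>k\<in>{1..I}. 0 < B1mat I J E (mu n) jh (\<sigma> k) (\<sigma> k)) \<and>
              B1mat I J E (mu n) jh ih ih = mu n ih jh)"
proof -
  \<comment> \<open>For a fixed \<open>n\<close> only the tree, the column sums of \<open>\<xi>*\<close> and the positivity of the
    service rates are needed.\<close>
  have ih: "ih \<in> {1..I}" and jh: "jh \<in> {1..J}" using hat bip_tree_edges[OF tree] by auto
  interpret rooted_bip_tree I J E jh using tree jh by unfold_locales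
  obtain \<sigma> where \<sigma>: "bij_betw \<sigma> {1..I} {1..I}" "\<sigma> I = ih"
      "\<forall>k\<in>{1..I}. \<forall>l\<in>{1..I}. k < l \<longrightarrow> B1_paths (mu n) (\<sigma> k) (\<sigma> l) = 0"
    using B1_paths_triangular[OF hat] by blast
  have diag: "0 < B1_paths (mu n) (\<sigma> k) (\<sigma> k)" if "k \<in> {1..I}" for k
    using B1_paths_diag[OF bij_betw_apply[OF \<sigma>(1) that]] mu_pos[OF n_pos] by metis
  show ?thesis
    apply (intro conjI)
    subgoal using drift_decomposition[OF crp_sum n_pos] ih by auto
    subgoal by (simp add: B2mat_eq B2_paths_def)
    subgoal unfolding B1mat_eq using \<sigma> diag B1_paths_adjacent[OF hat] by blast
    done
qed

end
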